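(* Assume $\mathrm{recc}(C)\subseteq\mathrm{recc}(P^B)$ and fix $k\in N_2$. If $N_0\subseteq J$, then there exists $\epsilon>0$ such that $\bar x+\epsilon\bar r^j\in S_k^C$ for all $j\in N$.
   Context: Let $A\in\mathbb{R}^{m\times n}$ have full row rank, $b\in\mathbb{R}^m$, and $P=\{x\in\mathbb{R}^n_+:Ax=b\}$. Let $C\subseteq\mathbb{R}^n$ be an open convex set. Fix a basis $B$ of $P$ with nonbasic set $N=\{1,\dots,n\}\setminus B$. Write $P=\{x:x_i=\bar b_i-\sum_{j\in N}\bar a_{ij}x_j\ (i\in B),\ x\ge0\}$ with $\bar b\ge0$. The basic solution $\bar x$ has $\bar x_i=\bar b_i$ ($i\in B$) and $0$ ($i\in N$). $P^B$ is obtained by dropping $x_i\ge0$ for $i\in B$. For $j\in N$, $\bar r^j$ has $\bar r^j_k=-\bar a_{kj}$ ($k\in B$), $\bar r^j_j=1$, and $0$ otherwise. Thus $P^B=\{\bar x+\sum_{j\in N}x_j\bar r^j:x_j\ge0\}$. It is assumed that $\bar x\notin\mathrm{cl}(C)$. For $j\in N$, $\alpha_j=\inf\{\lambda\ge0:\bar x+\lambda\bar r^j\in C\}$ and $\beta_j=\sup\{\lambda\ge0:\bar x+\lambda\bar r^j\in C\}$, with $\alpha_j=+\infty$, $\beta_j=-\infty$ if the halfline misses $C$. The set $N$ is partitioned into - $N_0=\{j:\alpha_j=+\infty,\beta_j=-\infty\}$, - $N_1=\{j:\alpha_j\in(0,\infty),\beta_j=+\infty\}$, - $N_2=\{j:\alpha_j\in(0,\infty),\beta_j\in(\alpha_j,\infty)\}$.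 For a set $K$, $\mathrm{recc}(K)=\{d:x+\lambda d\in K\ \forall x\in K,\lambda\ge0\}$. For $k\in N_2$, $S_k^C=\{\bar x\}+\mathrm{conv}\big(\bigcup_{j\in N_2}\{\lambda\bar r^j:0\le\lambda<\beta_j\}\big)+\{\lambda\bar r^k:\lambda\le0\}+\mathrm{recc}(C)$, and $J=\{i\in N:\bar r^i\in\mathrm{recc}(S_k^C)\}$. *)

theory Defs
  imports "HOL-Analysis.Analysis"
begin

text \<open>Index set {1..n} is modelled by a finite type 'n, {1..m} by a finite type 'm.
  A :: real^'n^'m is an m x n matrix; vectors of R^n are real^'n.\<close>

definition polyP :: "real^'n^'m \<Rightarrow> real^'m \<Rightarrow> (real^'n) set" where
  "polyP A b = {x. (\<forall>i. 0 \<le> x $ i) \<and> A *v x = b}"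

definition is_basis :: "real^'n^'m \<Rightarrow> 'n set \<Rightarrow> bool" where
  "is_basis A B \<longleftrightarrow> card B = CARD('m) \<and>
     (\<forall>c. (\<Sum>i\<in>B. c i *s column i A) = 0 \<longrightarrow> (\<forall>i\<in>B. c i = 0))"

definition xbar :: "real^'n^'m \<Rightarrow> real^'m \<Rightarrow> 'n set \<Rightarrow> real^'n" where
  "xbar A b B = (THE x. A *v x = b \<and> (\<forall>i. i \<notin> B \<longrightarrow> x $ i = 0))"

definition is_basis_of_P :: "real^'n^'m \<Rightarrow> real^'m \<Rightarrow> 'n set \<Rightarrow> bool" where
  "is_basis_of_P A b B \<longleftrightarrow> is_basis A B \<and> (\<forall>i. 0 \<le> xbar A b B $ i)"

text \<open>Tableau ray rbar^j: entries -abar_kj at basic k, 1 at j, 0 at other nonbasic indices;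
  equivalently the unique r with A r = 0, r_j = 1 and r_l = 0 for nonbasic l \<noteq> j.\<close>
definition rbar :: "real^'n^'m \<Rightarrow> 'n set \<Rightarrow> 'n \<Rightarrow> real^'n" where
  "rbar A B j = (THE r. A *v r = 0 \<and> r $ j = 1 \<and> (\<forall>l. l \<notin> B \<and> l \<noteq> j \<longrightarrow> r $ l = 0))"

definition polyPB :: "real^'n^'m \<Rightarrow> real^'m \<Rightarrow> 'n set \<Rightarrow> (real^'n) set" where
  "polyPB A b B = {x. A *v x = b \<and> (\<forall>i. i \<notin> B \<longrightarrow> 0 \<le> x $ i)}"

definition recc :: "(real^'n) set \<Rightarrow> (real^'n) set" where
  "recc K = {d. \<forall>x\<in>K. \<forall>t::real. t \<ge> 0 \<longrightarrow> x + t *\<^sub>R d \<in> K}"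

text \<open>alpha/beta in the extended reals: Inf {} = +infinity, Sup {} = -infinity.\<close>
definition alpha :: "(real^'n) set \<Rightarrow> real^'n \<Rightarrow> real^'n \<Rightarrow> ereal" where
  "alpha C x r = Inf (ereal ` {t. t \<ge> 0 \<and> x + t *\<^sub>R r \<in> C})"

definition beta :: "(real^'n) set \<Rightarrow> real^'n \<Rightarrow> real^'n \<Rightarrow> ereal" where
  "beta C x r = Sup (ereal ` {t. t \<ge> 0 \<and> x + t *\<^sub>R r \<in> C})"

definition N0 :: "real^'n^'m \<Rightarrow> real^'m \<Rightarrow> 'n set \<Rightarrow> (real^'n) set \<Rightarrow> 'n set" where
  "N0 A b B C = {j. j \<notin> B \<and> alpha C (xbar A b B) (rbar A B j) = \<infinity>
                         \<and> beta C (xbar A b B) (rbar A B j) = -\<infinity>}"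

definition N1 :: "real^'n^'m \<Rightarrow> real^'m \<Rightarrow> 'n set \<Rightarrow> (real^'n) set \<Rightarrow> 'n set" where
  "N1 A b B C = {j. j \<notin> B \<and> 0 < alpha C (xbar A b B) (rbar A B j)
                         \<and> alpha C (xbar A b B) (rbar A B j) < \<infinity>
                         \<and> beta C (xbar A b B) (rbar A B j) = \<infinity>}"

definition N2 :: "real^'n^'m \<Rightarrow> real^'m \<Rightarrow> 'n set \<Rightarrow> (real^'n) set \<Rightarrow> 'n set" where
  "N2 A b B C = {j. j \<notin> B \<and> 0 < alpha C (xbar A b B) (rbar A B j)
                         \<and> alpha C (xbar A b B) (rbar A B j) < \<infinity>
                         \<and> alpha C (xbar A b B) (rbar A B j) < beta C (xbar A b B) (rbar A B j)
                         \<and> beta C (xbar A b B) (rbar A B j) < \<infinity>}"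

definition SkC :: "real^'n^'m \<Rightarrow> real^'m \<Rightarrow> 'n set \<Rightarrow> (real^'n) set \<Rightarrow> 'n \<Rightarrow> (real^'n) set" where
  "SkC A b B C k =
     {xbar A b B + u + v + w | u v w.
        u \<in> convex hull (\<Union>j\<in>N2 A b B C.
               {t *\<^sub>R rbar A B j | t. 0 \<le> t \<and> ereal t < beta C (xbar A b B) (rbar A B j)})
      \<and> v \<in> {t *\<^sub>R rbar A B k | t. t \<le> 0}
      \<and> w \<in> recc C}"

definition Jset :: "real^'n^'m \<Rightarrow> real^'m \<Rightarrow> 'n set \<Rightarrow> (real^'n) set \<Rightarrow> 'n \<Rightarrow> 'n set" where
  "Jset A b B C k = {i. i \<notin> B \<and> rbar A B i \<in> recc (SkC A b B C k)}"

end

theory Submission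
  imports Defs
begin

text \<open>
  For a nonbasic index j the parameters t \<ge> 0 with xbar + t rbar^j \<in> C form an interval
  (C is convex) that is open (C is open) and bounded away from 0 (xbar \<notin> cl C). Hence either
  the halfline misses C, so j \<in> N0 and rbar^j \<in> recc S_k^C by hypothesis; or it stays in C
  from some point on, and then rbar^j \<in> recc C \<subseteq> recc S_k^C, because an open convex set
  containing a halfline contains every parallel halfline starting in it; or j \<in> N2, and
  xbar + t rbar^j \<in> S_k^C for 0 \<le> t < beta_j. Since xbar \<in> S_k^C (as k \<in> N2), every
  sufficiently small \<epsilon> > 0 works for the finitely many j at once.
\<close>

lemma halfline_translate_open_convex:
  fixes C :: "'a::euclidean_space set"
  assumes "open C" and "convex C" and halfline: "\<forall>t\<ge>0. w + t *\<^sub>R r \<in> C"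
    and "y \<in> C" and "0 \<le> s"
  shows "y + s *\<^sub>R r \<in> C"
proof -
  have in_closure: "y + c *\<^sub>R r \<in> closure C" if "0 \<le> c" for c
  proof (rule Lim_in_closed_set)
    have "y + c *\<^sub>R r + t *\<^sub>R (w - y) \<in> C" if "0 < t" "t < 1" for t
    proof -
      have "(1 - t) *\<^sub>R y + t *\<^sub>R (w + (c / t) *\<^sub>R r) \<in> C"
        using that \<open>0 \<le> c\<close> \<open>y \<in> C\<close> halfline by (intro convexD_alt[OF \<open>convex C\<close>]) auto
      moreover have "(1 - t) *\<^sub>R y + t *\<^sub>R (w + (c / t) *\<^sub>R r) = y + c *\<^sub>R r + t *\<^sub>R (w - y)"
        using that by (simp add: algebra_simps)
      ultimately show ?thesis by simp
    qed
    then show "\<forall>\<^sub>F t in at_right 0. y + c *\<^sub>R r + t *\<^sub>R (w - y) \<in> closure C"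
      unfolding eventually_at_right_field using closure_subset by (metis zero_less_one subsetD)
    have "((\<lambda>t. y + c *\<^sub>R r + t *\<^sub>R (w - y)) \<longlongrightarrow> y + c *\<^sub>R r + 0 *\<^sub>R (w - y)) (at_right 0)"
      by (intro tendsto_intros)
    then show "((\<lambda>t. y + c *\<^sub>R r + t *\<^sub>R (w - y)) \<longlongrightarrow> y + c *\<^sub>R r) (at_right 0)"
      by simp
  qed auto
  show ?thesis
  proof (cases "s *\<^sub>R r = 0")
    case False
    \<comment> \<open>an interior point and a closure point span an open segment inside the interior\<close>
    have "y + s *\<^sub>R r = midpoint y (y + (2 * s) *\<^sub>R r)"
      by (simp add: midpoint_def algebra_simps flip: scaleR_add_left)
    also have "\<dots> \<in> open_segment y (y + (2 * s) *\<^sub>R r)"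
      using False by simp
    also have "\<dots> \<subseteq> interior C"
      using \<open>open C\<close> \<open>y \<in> C\<close> \<open>0 \<le> s\<close>
      by (intro in_interior_closure_convex_segment \<open>convex C\<close> in_closure) (auto simp: interior_open)
    finally show ?thesis using \<open>open C\<close> by (simp add: interior_open)
  qed (use \<open>y \<in> C\<close> in auto)
qed

lemma recc_add:
  assumes "d \<in> recc K" and "e \<in> recc K"
  shows "d + e \<in> recc K"
  unfolding recc_def
proof (intro CollectI ballI allI impI)
  fix x and t :: real assume "x \<in> K" "0 \<le> t"
  then have "x + t *\<^sub>R d \<in> K" using assms(1) by (simp add: recc_def)
  then have "(x + t *\<^sub>R d) + t *\<^sub>R e \<in> K" using assms(2) \<open>0 \<le> t\<close> by (simp add: recc_def)
  then show "x + t *\<^sub>R (d + e) \<in> K" by (simp add: scaleR_add_right add.assoc)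
qed

lemma recc_scaleR:
  assumes "d \<in> recc K" and "0 \<le> c"
  shows "c *\<^sub>R d \<in> recc K"
  using assms unfolding recc_def by simp

lemma convex_line_preimage:
  assumes "convex C"
  shows "convex {t. x + t *\<^sub>R r \<in> C}"
proof (rule convexI)
  fix s t u v :: real
  assume "s \<in> {t. x + t *\<^sub>R r \<in> C}" "t \<in> {t. x + t *\<^sub>R r \<in> C}" "0 \<le> u" "0 \<le> v" "u + v = 1"
  then have "u *\<^sub>R (x + s *\<^sub>R r) + v *\<^sub>R (x + t *\<^sub>R r) \<in> C"
    using assms by (intro convexD) auto
  moreover have "u *\<^sub>R (x + s *\<^sub>R r) + v *\<^sub>R (x + t *\<^sub>R r) = x + (u * s + v * t) *\<^sub>R r"
    using \<open>u + v = 1\<close> by (simp add: algebra_simps flip: scaleR_add_left)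
  ultimately show "u *\<^sub>R s + v *\<^sub>R t \<in> {t. x + t *\<^sub>R r \<in> C}" by simp
qed

lemma alpha_pos_if_notin_closure:
  assumes "x \<notin> closure C"
  shows "0 < alpha C x r"
proof -
  have "open (- ((\<lambda>t. x + t *\<^sub>R r) -` closure C))"
    by (intro open_Compl continuous_closed_vimage closed_closure) (simp_all add: continuous_intros)
  moreover have "0 \<in> - ((\<lambda>t. x + t *\<^sub>R r) -` closure C)"
    using assms by simp
  ultimately obtain \<delta> where "0 < \<delta>" and \<delta>: "ball 0 \<delta> \<subseteq> - ((\<lambda>t. x + t *\<^sub>R r) -` closure C)"
    using open_contains_ball by blast
  have "\<delta> \<le> t" if "0 \<le> t" "x + t *\<^sub>R r \<in> C" for t
  proof (rule ccontr)
    assume "\<not> \<delta> \<le> t"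
    then have "t \<in> ball 0 \<delta>" using \<open>0 \<le> t\<close> by simp
    then show False using \<delta> that(2) closure_subset by blast
  qed
  then have "ereal \<delta> \<le> alpha C x r"
    unfolding alpha_def by (auto intro!: Inf_greatest)
  moreover have "0 < ereal \<delta>" using \<open>0 < \<delta>\<close> by simp
  ultimately show ?thesis by (rule order.strict_trans2[rotated])
qed

lemma alpha_less_beta:
  assumes "open C" and "x \<notin> C" and "0 \<le> t\<^sub>0" and "x + t\<^sub>0 *\<^sub>R r \<in> C"
  shows "alpha C x r < beta C x r"
proof -
  have "0 < t\<^sub>0" using assms(2-4) by (cases "t\<^sub>0 = 0") auto
  have "open ((\<lambda>t. x + t *\<^sub>R r) -` C)"
    by (intro continuous_open_vimage \<open>open C\<close>) (simp_all add: continuous_intros)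
  then obtain h where "0 < h" and h: "ball t\<^sub>0 h \<subseteq> (\<lambda>t. x + t *\<^sub>R r) -` C"
    using assms(4) open_contains_ball by blast
  define t\<^sub>1 where "t\<^sub>1 = t\<^sub>0 - min h t\<^sub>0 / 2"
  have "0 \<le> t\<^sub>1" "t\<^sub>1 < t\<^sub>0" "t\<^sub>1 \<in> ball t\<^sub>0 h"
    using \<open>0 < h\<close> \<open>0 < t\<^sub>0\<close> by (auto simp: t\<^sub>1_def dist_real_def)
  then have "alpha C x r \<le> ereal t\<^sub>1"
    using h unfolding alpha_def by (auto intro!: Inf_lower)
  also have "\<dots> < ereal t\<^sub>0" using \<open>t\<^sub>1 < t\<^sub>0\<close> by simp
  also have "\<dots> \<le> beta C x r"
    using assms(3,4) unfolding beta_def by (auto intro!: Sup_upper)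
  finally show ?thesis .
qed

lemma recc_if_beta_infinite:
  assumes "open C" and "convex C" and "beta C x r = \<infinity>"
  shows "r \<in> recc C"
proof -
  let ?T = "{t. 0 \<le> t \<and> x + t *\<^sub>R r \<in> C}"
  have "?T \<noteq> {}"
  proof
    assume "?T = {}"
    then have "beta C x r = Sup (ereal ` {})" unfolding beta_def by (simp only:)
    with assms(3) show False by (simp add: bot_ereal_def)
  qed
  then obtain t\<^sub>0 where "0 \<le> t\<^sub>0" and "x + t\<^sub>0 *\<^sub>R r \<in> C" by blast
  have interval: "is_interval {t. x + t *\<^sub>R r \<in> C}"
    by (rule is_interval_convex_1[THEN iffD2, OF convex_line_preimage[OF \<open>convex C\<close>]])
  have halfline: "\<forall>t\<ge>0. x + t\<^sub>0 *\<^sub>R r + t *\<^sub>R r \<in> C"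
  proof (intro allI impI)
    fix t :: real assume "0 \<le> t"
    have "ereal (t\<^sub>0 + t) < beta C x r"
      using assms(3) by simp
    then obtain e where "e \<in> ereal ` ?T" and "ereal (t\<^sub>0 + t) < e"
      unfolding beta_def less_Sup_iff by blast
    then obtain t\<^sub>1 where "x + t\<^sub>1 *\<^sub>R r \<in> C" and "t\<^sub>0 + t < t\<^sub>1"
      by auto
    with \<open>x + t\<^sub>0 *\<^sub>R r \<in> C\<close> \<open>0 \<le> t\<close>
    have "t\<^sub>0 \<in> {t. x + t *\<^sub>R r \<in> C}" "t\<^sub>1 \<in> {t. x + t *\<^sub>R r \<in> C}" "t\<^sub>0 \<le> t\<^sub>0 + t" "t\<^sub>0 + t \<le> t\<^sub>1"
      by auto
    then have "t\<^sub>0 + t \<in> {t. x + t *\<^sub>R r \<in> C}"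
      by (rule mem_is_interval_1_I[OF interval])
    then show "x + t\<^sub>0 *\<^sub>R r + t *\<^sub>R r \<in> C" by (simp add: algebra_simps)
  qed
  show ?thesis unfolding recc_def
  proof (intro CollectI ballI allI impI)
    fix y and s :: real assume "y \<in> C" and "0 \<le> s"
    then show "y + s *\<^sub>R r \<in> C"
      by (rule halfline_translate_open_convex[OF assms(1,2) halfline])
  qed
qed

lemma nonbasic_index_cases:
  assumes "open C" and "convex C" and "xbar A b B \<notin> closure C" and "j \<notin> B"
  obtains "j \<in> N0 A b B C" | "rbar A B j \<in> recc C" | "j \<in> N2 A b B C"
proof -
  let ?x = "xbar A b B" and ?r = "rbar A B j"
  let ?T = "{t. 0 \<le> t \<and> ?x + t *\<^sub>R ?r \<in> C}"
  show thesis
  proof (cases "?T = {}")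
    case True
    then have "alpha C ?x ?r = Inf (ereal ` {})" and "beta C ?x ?r = Sup (ereal ` {})"
      unfolding alpha_def beta_def by (simp_all only:)
    then show thesis
      using that(1) \<open>j \<notin> B\<close> by (simp add: N0_def top_ereal_def bot_ereal_def)
  next
    case False
    then obtain t\<^sub>0 where "0 \<le> t\<^sub>0" "?x + t\<^sub>0 *\<^sub>R ?r \<in> C" by blast
    moreover have "?x \<notin> C" using assms(3) closure_subset by blast
    ultimately have less: "alpha C ?x ?r < beta C ?x ?r"
      by (rule alpha_less_beta[OF \<open>open C\<close>, rotated])
    have pos: "0 < alpha C ?x ?r"
      using alpha_pos_if_notin_closure[OF assms(3)] .
    show thesis
    proof (cases "beta C ?x ?r = \<infinity>")
      case True
      then show thesis using that(2) recc_if_beta_infinite[OF assms(1,2)] by blast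
    next
      case False
      then have "j \<in> N2 A b B C"
        using less pos \<open>j \<notin> B\<close> unfolding N2_def by (auto simp: less_top[symmetric])
      then show thesis using that(3) by blast
    qed
  qed
qed

abbreviation N2_rays :: "real^'n^'m \<Rightarrow> real^'m \<Rightarrow> 'n set \<Rightarrow> (real^'n) set \<Rightarrow> (real^'n) set" where
  "N2_rays A b B C \<equiv> \<Union>j\<in>N2 A b B C.
     {t *\<^sub>R rbar A B j | t. 0 \<le> t \<and> ereal t < beta C (xbar A b B) (rbar A B j)}"

lemma SkC_memI:
  assumes "u \<in> convex hull N2_rays A b B C" and "t \<le> 0" and "w \<in> recc C"
  shows "xbar A b B + u + t *\<^sub>R rbar A B k + w \<in> SkC A b B C k"
  unfolding SkC_def using assms by (intro CollectI exI conjI refl) auto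

lemma SkC_memE:
  assumes "z \<in> SkC A b B C k"
  obtains u t w where "z = xbar A b B + u + t *\<^sub>R rbar A B k + w"
    and "u \<in> convex hull N2_rays A b B C" and "t \<le> 0" and "w \<in> recc C"
  using assms unfolding SkC_def by blast

lemma recc_subset_recc_SkC: "recc C \<subseteq> recc (SkC A b B C k)"
proof
  fix d assume "d \<in> recc C"
  show "d \<in> recc (SkC A b B C k)" unfolding recc_def
  proof (intro CollectI ballI allI impI)
    fix z and s :: real assume "z \<in> SkC A b B C k" "0 \<le> s"
    from \<open>z \<in> SkC A b B C k\<close> obtain u t w where z: "z = xbar A b B + u + t *\<^sub>R rbar A B k + w"
      and "u \<in> convex hull N2_rays A b B C" "t \<le> 0" "w \<in> recc C"
      by (rule SkC_memE)
    moreover have "w + s *\<^sub>R d \<in> recc C"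
      using \<open>w \<in> recc C\<close> \<open>d \<in> recc C\<close> \<open>0 \<le> s\<close> by (intro recc_add recc_scaleR)
    ultimately have "xbar A b B + u + t *\<^sub>R rbar A B k + (w + s *\<^sub>R d) \<in> SkC A b B C k"
      by (intro SkC_memI)
    then show "z + s *\<^sub>R d \<in> SkC A b B C k"
      by (simp add: z add.assoc)
  qed
qed

lemma ray_N2_in_SkC:
  assumes "j \<in> N2 A b B C" and "0 \<le> t" and "ereal t < beta C (xbar A b B) (rbar A B j)"
  shows "xbar A b B + t *\<^sub>R rbar A B j \<in> SkC A b B C k"
proof -
  have "t *\<^sub>R rbar A B j \<in> N2_rays A b B C"
    using assms by blast
  then have "xbar A b B + t *\<^sub>R rbar A B j + 0 *\<^sub>R rbar A B k + 0 \<in> SkC A b B C k"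
    by (intro SkC_memI hull_inc) (auto simp: recc_def)
  then show ?thesis by simp
qed

lemma beta_pos_if_N2:
  assumes "j \<in> N2 A b B C"
  shows "0 < beta C (xbar A b B) (rbar A B j)"
  using assms unfolding N2_def by (blast intro: order.strict_trans)

lemma xbar_in_SkC:
  assumes "k \<in> N2 A b B C"
  shows "xbar A b B \<in> SkC A b B C k"
  using ray_N2_in_SkC[OF assms, of 0 k] beta_pos_if_N2[OF assms] by (simp add: zero_ereal_def)

lemma eventually_nonbasic_ray_in_SkC:
  assumes "open C" and "convex C" and "xbar A b B \<notin> closure C"
    and "k \<in> N2 A b B C" and "N0 A b B C \<subseteq> Jset A b B C k" and "j \<notin> B"
  shows "\<forall>\<^sub>F \<epsilon> in at_right 0. xbar A b B + \<epsilon> *\<^sub>R rbar A B j \<in> SkC A b B C k"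
proof -
  consider "rbar A B j \<in> recc (SkC A b B C k)" | "j \<in> N2 A b B C"
    by (rule nonbasic_index_cases[OF assms(1-3,6)])
      (use assms(5) recc_subset_recc_SkC[of C A b B k] in \<open>auto simp: Jset_def\<close>)
  moreover have positive: "\<forall>\<^sub>F \<epsilon> in at_right (0::real). 0 < \<epsilon>"
    by (rule eventually_at_right_less)
  ultimately show ?thesis
  proof cases
    case 1
    have "xbar A b B + \<epsilon> *\<^sub>R rbar A B j \<in> SkC A b B C k" if "0 < \<epsilon>" for \<epsilon>
      using 1 xbar_in_SkC[OF assms(4)] that unfolding recc_def by simp
    with positive show ?thesis by (auto elim: eventually_mono)
  next
    case 2
    have "ereal 0 < beta C (xbar A b B) (rbar A B j)"
      using beta_pos_if_N2[OF 2] by (simp add: zero_ereal_def)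
    then have "\<forall>\<^sub>F \<epsilon> in at_right 0. ereal \<epsilon> < beta C (xbar A b B) (rbar A B j)"
      by (rule order_tendstoD(2)[OF tendsto_ereal[OF tendsto_ident_at]])
    with positive show ?thesis
      by (rule eventually_elim2) (simp add: ray_N2_in_SkC[OF 2])
  qed
qed

theorem corollary2:
  fixes A :: "real^'n^'m" and b :: "real^'m" and B :: "'n set"
    and C :: "(real^'n) set" and k :: 'n
  assumes full_row_rank: "rank A = CARD('m)"
    and basis: "is_basis_of_P A b B"
    and C_open: "open C" and C_convex: "convex C"
    and xbar_notin: "xbar A b B \<notin> closure C"
    and recc_sub: "recc C \<subseteq> recc (polyPB A b B)"
    and k_N2: "k \<in> N2 A b B C"
    and N0_J: "N0 A b B C \<subseteq> Jset A b B C k"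
  shows "\<exists>\<epsilon>>0. \<forall>j. j \<notin> B \<longrightarrow> xbar A b B + \<epsilon> *\<^sub>R rbar A B j \<in> SkC A b B C k"
proof -
  have "\<forall>\<^sub>F \<epsilon> in at_right 0. j \<notin> B \<longrightarrow> xbar A b B + \<epsilon> *\<^sub>R rbar A B j \<in> SkC A b B C k"
    for j
    using eventually_nonbasic_ray_in_SkC[OF C_open C_convex xbar_notin k_N2 N0_J, of j]
    by (cases "j \<in> B") simp_all
  then have "\<forall>\<^sub>F \<epsilon> in at_right 0. 0 < \<epsilon> \<and>
      (\<forall>j. j \<notin> B \<longrightarrow> xbar A b B + \<epsilon> *\<^sub>R rbar A B j \<in> SkC A b B C k)"
    by (intro eventually_conj eventually_at_right_less eventually_all_finite)
  then show ?thesis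
    using eventually_happens'[OF trivial_limit_at_right_real] by blast
qed

end
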